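(* For every $n$ with $2\le n\le\infty$, the identity $ytxsyx \approx ytxsxy$ is a finite identity basis for the $\sharp$-sylvester monoid $\mathrm{sylv}^\sharp_n$. Consequently, all $\sharp$-sylvester monoids of rank at least $2$ (including rank $\infty$) are equationally equivalent.
   Context: Let $\mathcal{A}=\{1<2<3<\cdots\}$, $\mathcal{A}_n=\{1<\cdots<n\}$, $\mathcal{A}_\infty=\mathcal{A}$. A left strict binary search tree is a labelled rooted binary tree (labels in $\mathcal{A}$) in which each node's label is $>$ every label in its left subtree and $\le$ every label in its right subtree. Inserting $a$ into such a tree $T$: if $T$ is empty, create a node labelled $a$; otherwise, with root label $x$, recursively insert $a$ into the left subtree if $a<x$ and into the right subtree otherwise. For $w=w_1\cdots w_k\in\mathcal{A}^*$, $\mathrm{P}^\sharp(w)$ is obtained from the empty tree by inserting $w_1,w_2,\dots,w_k$ in this order (reading left to right). The relation $u\equiv v\iff\mathrm{P}^\sharp(u)=\mathrm{P}^\sharp(v)$ is a congruence, and $\mathrm{sylv}^\sharp_n=\mathcal{A}_n^*/{\equiv}$. Identities: $\mathcal{X}$ is a countably infinite alphabet; an identity is $\mathbf{u}\approx\mathbf{v}$ with $\mathbf{u},\mathbf{v}\in\mathcal{X}^*$; a monoid $S$ satisfies it if $\varphi(\mathbf{u})=\varphi(\mathbf{v})$ for all maps $\varphi:\mathcal{X}\to S$ (extended to monoid homomorphisms). $\mathbf{u}\approx\mathbf{v}$ is derived from a set $\Sigma$ if there is a sequence $\mathbf{u}=\mathbf{u}_1,\dots,\mathbf{u}_m=\mathbf{v}$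 with $\mathbf{u}_i=\mathbf{a}\varphi(\mathbf{p})\mathbf{b}$, $\mathbf{u}_{i+1}=\mathbf{a}\varphi(\mathbf{q})\mathbf{b}$ for some words $\mathbf{a},\mathbf{b}\in\mathcal{X}^*$, a monoid endomorphism $\varphi$ of $\mathcal{X}^*$ (letters may go to the empty word), and $\mathbf{p}\approx\mathbf{q}\in\Sigma$. A finite identity basis for $S$ is a finite set $\Sigma$ of identities satisfied by $S$ from which every identity satisfied by $S$ is derived. Two monoids are equationally equivalent if they satisfy the same identities. *)

theory Defs
  imports Main "HOL-Library.Extended_Nat"
begin

datatype ltree = Lf | Nd ltree nat ltree

fun ins_sharp :: "nat \<Rightarrow> ltree \<Rightarrow> ltree" where
  "ins_sharp a Lf = Nd Lf a Lf"
| "ins_sharp a (Nd l x r) =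
     (if a < x then Nd (ins_sharp a l) x r else Nd l x (ins_sharp a r))"

definition P_sharp :: "nat list \<Rightarrow> ltree" where
  "P_sharp w = fold ins_sharp w Lf"

definition alph :: "enat \<Rightarrow> nat set" where
  "alph n = {a. 1 \<le> a \<and> enat a \<le> n}"

definition sylv_equiv :: "nat list \<Rightarrow> nat list \<Rightarrow> bool" where
  "sylv_equiv u v \<longleftrightarrow> P_sharp u = P_sharp v"

(* Variables X: nat (countably infinite); words over X: nat list.
   Extension of a letter map to a monoid homomorphism of free monoids. *)
definition hom_ext :: "(nat \<Rightarrow> 'b list) \<Rightarrow> nat list \<Rightarrow> 'b list" where
  "hom_ext \<phi> u = concat (map \<phi> u)"

(* sylv^sharp_n = A_n^* / \<equiv> satisfies u \<approx> v: every assignment of the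
   variables to elements of the monoid (represented by words over A_n, i.e.
   elements of A_n^* taken modulo \<equiv>) yields equal elements *)
definition sylv_satisfies :: "enat \<Rightarrow> nat list \<times> nat list \<Rightarrow> bool" where
  "sylv_satisfies n e \<longleftrightarrow>
     (\<forall>\<phi> :: nat \<Rightarrow> nat list. (\<forall>x. set (\<phi> x) \<subseteq> alph n) \<longrightarrow>
        sylv_equiv (hom_ext \<phi> (fst e)) (hom_ext \<phi> (snd e)))"

(* one derivation step from \<Sigma>: a \<phi>(p) b \<rightarrow> a \<phi>(q) b, with p \<approx> q in \<Sigma>
   (identities are unordered, so either orientation may be used) *)
definition deriv_step :: "(nat list \<times> nat list) set \<Rightarrow> nat list \<Rightarrow> nat list \<Rightarrow> bool" where
  "deriv_step \<Sigma> u v \<longleftrightarrow>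
     (\<exists>a b p q \<phi>. ((p, q) \<in> \<Sigma> \<or> (q, p) \<in> \<Sigma>) \<and>
        u = a @ hom_ext \<phi> p @ b \<and> v = a @ hom_ext \<phi> q @ b)"

definition derivable :: "(nat list \<times> nat list) set \<Rightarrow> nat list \<times> nat list \<Rightarrow> bool" where
  "derivable \<Sigma> e \<longleftrightarrow> (deriv_step \<Sigma>)\<^sup>*\<^sup>* (fst e) (snd e)"

definition finite_identity_basis :: "enat \<Rightarrow> (nat list \<times> nat list) set \<Rightarrow> bool" where
  "finite_identity_basis n \<Sigma> \<longleftrightarrow>
     finite \<Sigma> \<and> (\<forall>e\<in>\<Sigma>. sylv_satisfies n e) \<and>
     (\<forall>e. sylv_satisfies n e \<longrightarrow> derivable \<Sigma> e)"

definition equationally_equivalent :: "enat \<Rightarrow> enat \<Rightarrow> bool" where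
  "equationally_equivalent n m \<longleftrightarrow> (\<forall>e. sylv_satisfies n e \<longleftrightarrow> sylv_satisfies m e)"

(* variables x = 0, y = 1, t = 2, s = 3;
   the identity  y t x s y x  \<approx>  y t x s x y *)
definition ident_4p7 :: "nat list \<times> nat list" where
  "ident_4p7 = ([1, 2, 0, 3, 1, 0], [1, 2, 0, 3, 0, 1])"

end

theory Submission
  imports Defs "HOL-Library.Multiset"
begin

(* For a word u and a letter z, content_before z u is the multiset of letters of u preceding
   the first z.  For n \<ge> 2, sylv#_n satisfies u \<approx> v iff u and v have the same content and
   content_before z u = content_before z v for every z; this condition does not depend on n.
   Inserting two letters that are both already found in a tree commutes, so two adjacent letters
   may be swapped when both occurred earlier, and such swaps connect any two words satisfying the
   condition.  Each swap is an instance of ytxsyx \<approx> ytxsxy, with y and x the first occurrences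
   of the two letters.
   Conversely, substitute 2 for z, 1 for w \<noteq> z and the empty word for all other variables: the
   number of w's before the first z is the number of 1-labelled nodes at the top of the right
   spine of the resulting tree. *)

fun bst_find :: "nat \<Rightarrow> ltree \<Rightarrow> bool" where
  "bst_find b Lf = False"
| "bst_find b (Nd l x r) = (x = b \<or> (if b < x then bst_find b l else bst_find b r))"

fun search_paths_diverge :: "nat \<Rightarrow> nat \<Rightarrow> ltree \<Rightarrow> bool" where
  "search_paths_diverge a b Lf = False"
| "search_paths_diverge a b (Nd l x r) =
     (if a < x then (if b < x then search_paths_diverge a b l else True)
      else (if b < x then True else search_paths_diverge a b r))"

lemma search_paths_diverge_sym: "search_paths_diverge a b T = search_paths_diverge b a T"
  by (induction T) auto

lemma ins_sharp_commute_if_diverge: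
  "search_paths_diverge a b T \<Longrightarrow> ins_sharp a (ins_sharp b T) = ins_sharp b (ins_sharp a T)"
  by (induction T) (auto split: if_splits)

lemma search_paths_diverge_if_bst_find: "a < b \<Longrightarrow> bst_find b T \<Longrightarrow> search_paths_diverge a b T"
  by (induction T) (auto split: if_splits)

lemma bst_find_ins_sharp: "bst_find b T \<Longrightarrow> bst_find b (ins_sharp c T)"
  by (induction T) auto

lemma bst_find_ins_sharp_self: "bst_find c (ins_sharp c T)"
  by (induction T) auto

lemma bst_find_fold_ins_sharp: "bst_find b T \<Longrightarrow> bst_find b (fold ins_sharp w T)"
  by (induction w arbitrary: T) (auto intro: bst_find_ins_sharp)

lemma bst_find_fold_ins_sharp_mem: "b \<in> set w \<Longrightarrow> bst_find b (fold ins_sharp w T)"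
  by (induction w arbitrary: T) (auto intro: bst_find_fold_ins_sharp bst_find_ins_sharp_self)

lemma ins_sharp_commute:
  assumes "bst_find a T" and "bst_find b T"
  shows "ins_sharp a (ins_sharp b T) = ins_sharp b (ins_sharp a T)"
proof -
  consider "a < b" | "b < a" | "a = b" by linarith
  then show ?thesis
    using assms search_paths_diverge_if_bst_find ins_sharp_commute_if_diverge search_paths_diverge_sym
    by cases metis+
qed

lemma ins_sharp_fold_commute:
  "\<forall>x\<in>set w. bst_find x T \<Longrightarrow> bst_find a T \<Longrightarrow>
   ins_sharp a (fold ins_sharp w T) = fold ins_sharp w (ins_sharp a T)"
proof (induction w arbitrary: T)
  case (Cons b w)
  then have "ins_sharp a (fold ins_sharp w (ins_sharp b T)) = fold ins_sharp w (ins_sharp a (ins_sharp b T))"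
    by (auto intro!: Cons.IH bst_find_ins_sharp)
  with Cons.prems show ?case
    by (simp add: ins_sharp_commute)
qed simp

lemma fold_ins_sharp_perm:
  "\<forall>x\<in>set w. bst_find x T \<Longrightarrow> mset w = mset w' \<Longrightarrow> fold ins_sharp w T = fold ins_sharp w' T"
proof (induction w arbitrary: w' T)
  case (Cons a w)
  then have "a \<in> set w'"
    by (metis list.set_intros(1) set_mset_mset)
  then obtain P Q where w': "w' = P @ a # Q"
    by (meson split_list)
  have P: "\<forall>x\<in>set P. bst_find x T"
    using Cons.prems w' by (metis Un_iff set_append set_mset_mset list.set_intros(2))
  have "fold ins_sharp w' T = fold ins_sharp (P @ Q) (ins_sharp a T)"
    using w' ins_sharp_fold_commute[OF P] Cons.prems by simp
  also have "\<dots> = fold ins_sharp w (ins_sharp a T)"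
    using Cons.prems w' by (intro Cons.IH[symmetric]) (auto intro: bst_find_ins_sharp)
  finally show ?case
    by simp
qed simp

fun content_before :: "'a \<Rightarrow> 'a list \<Rightarrow> 'a multiset" where
  "content_before z [] = {#}"
| "content_before z (a # u) = (if a = z then {#} else add_mset a (content_before z u))"

lemma content_before_append:
  "content_before z (u @ v) = (if z \<in> set u then content_before z u else mset u + content_before z v)"
  by (induction u) auto

lemma content_before_notin: "z \<notin> set u \<Longrightarrow> content_before z u = mset u"
  by (induction u) auto

lemma set_content_before: "set_mset (content_before z u) \<subseteq> set u"
  by (induction u) auto

lemma count_content_before_self: "count (content_before z u) z = 0"
  by (induction u) auto

definition same_prefix_contents :: "'a list \<Rightarrow> 'a list \<Rightarrow> bool" where
  "same_prefix_contents u v \<longleftrightarrow> mset u = mset v \<and> (\<forall>z. content_before z u = content_before z v)"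

definition seen_swap :: "'a list \<Rightarrow> 'a list \<Rightarrow> bool" where
  "seen_swap u v \<longleftrightarrow>
     (\<exists>A c d B. c \<in> set A \<and> d \<in> set A \<and> u = A @ c # d # B \<and> v = A @ d # c # B)"

lemma seen_swaps_move_right:
  "c \<in> set A \<Longrightarrow> set P \<subseteq> set A \<Longrightarrow> seen_swap\<^sup>*\<^sup>* (A @ c # P @ Q) (A @ P @ c # Q)"
proof (induction P arbitrary: A)
  case (Cons p P)
  then have "seen_swap (A @ c # p # P @ Q) ((A @ [p]) @ c # P @ Q)"
    unfolding seen_swap_def by auto
  moreover have "seen_swap\<^sup>*\<^sup>* ((A @ [p]) @ c # P @ Q) ((A @ [p]) @ P @ c # Q)"
    using Cons.prems by (intro Cons.IH) auto
  ultimately show ?case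
    by (simp add: converse_rtranclp_into_rtranclp)
qed simp

lemma seen_swaps_if_prefix_contents:
  "mset u = mset v \<Longrightarrow> \<forall>z. z \<notin> set A \<longrightarrow> content_before z u = content_before z v \<Longrightarrow>
   seen_swap\<^sup>*\<^sup>* (A @ u) (A @ v)"
proof (induction u arbitrary: A v)
  case (Cons c u)
  show ?case
  proof (cases "c \<in> set A")
    case True
    have "c \<in> set v"
      using Cons.prems(1) by (metis list.set_intros(1) set_mset_mset)
    then obtain P Q where v: "v = P @ c # Q" and "c \<notin> set P"
      using split_list_first by metis
    have P: "set P \<subseteq> set A"
    proof
      fix z assume "z \<in> set P"
      show "z \<in> set A"
      proof (rule ccontr)
        assume "z \<notin> set A"
        with True have "c \<in># content_before z (c # u)"
          by auto
        also have "content_before z (c # u) = content_before z P"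
          using Cons.prems(2) \<open>z \<notin> set A\<close> \<open>z \<in> set P\<close> v by (simp add: content_before_append)
        finally show False
          using set_content_before \<open>c \<notin> set P\<close> by fast
      qed
    qed
    have "\<forall>z. z \<notin> set (A @ [c]) \<longrightarrow> content_before z u = content_before z (P @ Q)"
    proof (intro allI impI)
      fix z assume z: "z \<notin> set (A @ [c])"
      then have "z \<notin> set P"
        using P by auto
      with z Cons.prems(2)[rule_format, of z] v show "content_before z u = content_before z (P @ Q)"
        by (auto simp add: content_before_append)
    qed
    with Cons.prems(1) v have "seen_swap\<^sup>*\<^sup>* ((A @ [c]) @ u) ((A @ [c]) @ P @ Q)"
      by (intro Cons.IH) auto
    with seen_swaps_move_right[OF True P] v show ?thesis
      by (simp add: rtranclp_trans)
  next
    case False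
    then have "content_before c v = {#}"
      using Cons.prems(2) by (metis content_before.simps(2))
    moreover have "v \<noteq> []"
      using Cons.prems(1) by auto
    ultimately obtain v' where v: "v = c # v'"
      by (cases v) (auto split: if_splits)
    with Cons.prems have "seen_swap\<^sup>*\<^sup>* ((A @ [c]) @ u) ((A @ [c]) @ v')"
      by (intro Cons.IH) auto
    with v show ?thesis
      by simp
  qed
qed simp

lemma seen_swaps_if_same_prefix_contents: "same_prefix_contents u v \<Longrightarrow> seen_swap\<^sup>*\<^sup>* u v"
  using seen_swaps_if_prefix_contents[of u v "[]"] unfolding same_prefix_contents_def by simp

lemma P_sharp_hom_ext_seen_swap:
  assumes "seen_swap u v"
  shows "P_sharp (hom_ext \<phi> u) = P_sharp (hom_ext \<phi> v)"
proof -
  obtain A c d B where "c \<in> set A" "d \<in> set A" and u: "u = A @ c # d # B" and v: "v = A @ d # c # B"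
    using assms unfolding seen_swap_def by blast
  define T where "T = fold ins_sharp (hom_ext \<phi> A) Lf"
  have "\<forall>x\<in>set (\<phi> c @ \<phi> d). bst_find x T"
    unfolding T_def hom_ext_def using \<open>c \<in> set A\<close> \<open>d \<in> set A\<close>
    by (auto intro!: bst_find_fold_ins_sharp_mem)
  then have "fold ins_sharp (\<phi> c @ \<phi> d) T = fold ins_sharp (\<phi> d @ \<phi> c) T"
    by (rule fold_ins_sharp_perm) simp
  then show ?thesis
    unfolding u v P_sharp_def hom_ext_def T_def by simp
qed

lemma sylv_satisfies_if_same_prefix_contents:
  "same_prefix_contents u v \<Longrightarrow> sylv_satisfies n (u, v)"
proof -
  assume "same_prefix_contents u v"
  then have "seen_swap\<^sup>*\<^sup>* u v"
    by (rule seen_swaps_if_same_prefix_contents)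
  then have "P_sharp (hom_ext \<phi> u) = P_sharp (hom_ext \<phi> v)" for \<phi>
    by (induction rule: rtranclp_induct) (auto dest: P_sharp_hom_ext_seen_swap[where \<phi> = \<phi>])
  then show ?thesis
    unfolding sylv_satisfies_def sylv_equiv_def by simp
qed

lemma deriv_step_sym: "deriv_step \<Sigma> u v \<Longrightarrow> deriv_step \<Sigma> v u"
  unfolding deriv_step_def by blast

lemma deriv_step_ident_4p7:
  "deriv_step {ident_4p7} (A @ y # T @ x # S @ y # x # B) (A @ y # T @ x # S @ x # y # B)"
proof -
  define \<phi> where "\<phi> v = (if v = 0 then [x] else if v = 1 then [y] else if v = 2 then T else S)" for v :: nat
  show ?thesis
    unfolding deriv_step_def
    by (rule exI[of _ A], rule exI[of _ B], rule exI[of _ "fst ident_4p7"],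
        rule exI[of _ "snd ident_4p7"], rule exI[of _ \<phi>])
       (simp add: \<phi>_def hom_ext_def ident_4p7_def)
qed

lemma split_list_two:
  assumes "c \<in> set A" "d \<in> set A" "c \<noteq> d"
  obtains A1 T S where "A = A1 @ c # T @ d # S" | A1 T S where "A = A1 @ d # T @ c # S"
proof -
  obtain A1 A2 where A: "A = A1 @ c # A2"
    using assms(1) split_list by metis
  with assms have "d \<in> set A1 \<or> d \<in> set A2"
    by auto
  then show thesis
  proof
    assume "d \<in> set A1"
    then obtain T S where "A1 = T @ d # S"
      by (meson split_list)
    with A show thesis
      by (intro that(2)[of T S A2]) simp
  next
    assume "d \<in> set A2"
    then obtain T S where "A2 = T @ d # S"
      by (meson split_list)
    with A show thesis
      by (intro that(1)[of A1 T S]) simp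
  qed
qed

lemma derivable_seen_swap:
  assumes "seen_swap u v"
  shows "(deriv_step {ident_4p7})\<^sup>*\<^sup>* u v"
proof -
  obtain A c d B where "c \<in> set A" "d \<in> set A" and u: "u = A @ c # d # B" and v: "v = A @ d # c # B"
    using assms unfolding seen_swap_def by blast
  show ?thesis
  proof (cases "c = d")
    case False
    with \<open>c \<in> set A\<close> \<open>d \<in> set A\<close> have "deriv_step {ident_4p7} u v"
    proof (cases rule: split_list_two)
      case 2
      show ?thesis
        by (rule deriv_step_sym) (simp add: u v 2 deriv_step_ident_4p7)
    qed (simp add: u v deriv_step_ident_4p7)
    then show ?thesis
      by simp
  qed (simp add: u v)
qed

lemma derivable_if_same_prefix_contents:
  assumes "same_prefix_contents u v"
  shows "derivable {ident_4p7} (u, v)"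
proof -
  have "seen_swap\<^sup>*\<^sup>* u v"
    using assms by (rule seen_swaps_if_same_prefix_contents)
  then have "(deriv_step {ident_4p7})\<^sup>*\<^sup>* u v"
    by (induction rule: rtranclp_induct) (blast intro: rtranclp_trans derivable_seen_swap)+
  then show ?thesis
    unfolding derivable_def by simp
qed

fun ones_on_right_spine :: "ltree \<Rightarrow> nat" where
  "ones_on_right_spine Lf = 0"
| "ones_on_right_spine (Nd l x r) = (if x = 1 then Suc (ones_on_right_spine r) else 0)"

lemma fold_ins_sharp_root: "\<exists>l' r'. fold ins_sharp w (Nd l x r) = Nd l' x r'"
proof (induction w arbitrary: l r)
  case (Cons a w)
  then show ?case
    by (cases "a < x") auto
qed simp

lemma fold_ins_sharp_right:
  "\<forall>a\<in>set w. x \<le> a \<Longrightarrow> fold ins_sharp w (Nd l x r) = Nd l x (fold ins_sharp w r)"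
  by (induction w arbitrary: r) auto

lemma ones_on_right_spine_P_sharp:
  assumes "\<forall>a\<in>set R. 1 \<le> a" and "R = [] \<or> hd R \<noteq> 1"
  shows "ones_on_right_spine (P_sharp (replicate k 1 @ R)) = k"
proof (induction k)
  case 0
  show ?case
  proof (cases R)
    case (Cons a R')
    obtain l' r' where "fold ins_sharp R' (Nd Lf a Lf) = Nd l' a r'"
      using fold_ins_sharp_root by blast
    with Cons assms(2) show ?thesis
      by (simp add: P_sharp_def)
  qed (simp add: P_sharp_def)
next
  case (Suc k)
  have "P_sharp (replicate (Suc k) 1 @ R) = fold ins_sharp (replicate k 1 @ R) (Nd Lf 1 Lf)"
    by (simp add: P_sharp_def)
  also have "\<dots> = Nd Lf 1 (P_sharp (replicate k 1 @ R))"
    using assms(1) by (subst fold_ins_sharp_right) (auto simp: P_sharp_def)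
  finally show ?case
    using Suc.IH by simp
qed

lemma hom_ext_Cons: "hom_ext \<phi> (a # u) = \<phi> a @ hom_ext \<phi> u"
  by (simp add: hom_ext_def)

definition probe :: "nat \<Rightarrow> nat \<Rightarrow> nat \<Rightarrow> nat list" where
  "probe z w x = (if x = z then [2] else if x = w then [1] else [])"

lemma hom_ext_probe:
  assumes "z \<noteq> w"
  shows "\<exists>R. hom_ext (probe z w) u = replicate (count (content_before z u) w) 1 @ R \<and>
    (\<forall>a\<in>set R. 1 \<le> a) \<and> (R = [] \<or> hd R \<noteq> 1)"
proof (induction u)
  case Nil
  show ?case
    by (simp add: hom_ext_def)
next
  case (Cons a u)
  then obtain R where R: "hom_ext (probe z w) u = replicate (count (content_before z u) w) 1 @ R"
    "\<forall>a\<in>set R. 1 \<le> a" "R = [] \<or> hd R \<noteq> 1"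
    by blast
  consider "a = z" | "a \<noteq> z" "a = w" | "a \<noteq> z" "a \<noteq> w"
    by blast
  then show ?case
  proof cases
    case 1
    then have "probe z w a = [2]"
      by (simp add: probe_def)
    moreover have "\<forall>b\<in>set (hom_ext (probe z w) u). 1 \<le> b"
      by (auto simp: hom_ext_def probe_def)
    ultimately show ?thesis
      using 1 by (intro exI[of _ "2 # hom_ext (probe z w) u"]) (simp add: hom_ext_Cons)
  next
    case 2
    then have "probe z w a = [1]"
      by (simp add: probe_def)
    with 2 R show ?thesis
      by (simp add: hom_ext_Cons)
  next
    case 3
    then have "probe z w a = []"
      by (simp add: probe_def)
    with 3 R show ?thesis
      by (simp add: hom_ext_Cons)
  qed
qed

lemma ones_on_right_spine_probe:
  "z \<noteq> w \<Longrightarrow> ones_on_right_spine (P_sharp (hom_ext (probe z w) u)) = count (content_before z u) w"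
  using hom_ext_probe ones_on_right_spine_P_sharp by metis

lemma same_prefix_contents_if_sylv_satisfies:
  assumes "2 \<le> n" and "sylv_satisfies n (u, v)"
  shows "same_prefix_contents u v"
proof -
  have "set (probe z w x) \<subseteq> alph n" for z w x
    using assms(1) order_trans[of "enat 1" 2 n] order_trans[of "enat 2" 2 n]
    by (auto simp: probe_def alph_def one_enat_def numeral_eq_enat)
  with assms(2) have probe_eq: "P_sharp (hom_ext (probe z w) u) = P_sharp (hom_ext (probe z w) v)"
    for z w
    unfolding sylv_satisfies_def sylv_equiv_def by simp
  have "count (content_before z u) w = count (content_before z v) w" for z w
  proof (cases "z = w")
    case False
    then show ?thesis
      using probe_eq by (metis ones_on_right_spine_probe)
  qed (simp add: count_content_before_self)
  then have prefix: "content_before z u = content_before z v" for z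
    by (simp add: multiset_eqI)
  obtain z :: nat where "z \<notin> set u \<union> set v"
    using ex_new_if_finite[OF infinite_UNIV_nat] by blast
  with prefix[of z] have "mset u = mset v"
    by (simp add: content_before_notin)
  with prefix show ?thesis
    unfolding same_prefix_contents_def by blast
qed

lemma sylv_satisfies_iff_same_prefix_contents:
  "2 \<le> n \<Longrightarrow> sylv_satisfies n e \<longleftrightarrow> same_prefix_contents (fst e) (snd e)"
  using same_prefix_contents_if_sylv_satisfies sylv_satisfies_if_same_prefix_contents
  by (metis prod.collapse)

lemma same_prefix_contents_ident_4p7: "same_prefix_contents (fst ident_4p7) (snd ident_4p7)"
  by (auto simp: same_prefix_contents_def ident_4p7_def add_mset_commute)

theorem theorem4p7:
  shows "(\<forall>n::enat. 2 \<le> n \<longrightarrow> finite_identity_basis n {ident_4p7})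
       \<and> (\<forall>n m::enat. 2 \<le> n \<longrightarrow> 2 \<le> m \<longrightarrow> equationally_equivalent n m)"
proof (intro conjI allI impI)
  fix n :: enat
  assume n: "2 \<le> n"
  show "finite_identity_basis n {ident_4p7}"
    unfolding finite_identity_basis_def
  proof (intro conjI ballI allI impI)
    show "sylv_satisfies n e" if "e \<in> {ident_4p7}" for e
      using that n same_prefix_contents_ident_4p7 by (simp add: sylv_satisfies_iff_same_prefix_contents)
    show "derivable {ident_4p7} e" if "sylv_satisfies n e" for e
      using that n derivable_if_same_prefix_contents[of "fst e" "snd e"]
      by (simp add: sylv_satisfies_iff_same_prefix_contents)
  qed simp
next
  fix n m :: enat
  assume "2 \<le> n" and "2 \<le> m"
  then show "equationally_equivalent n m"
    unfolding equationally_equivalent_def by (simp add: sylv_satisfies_iff_same_prefix_contents)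
qed

end
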